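(* Let $K\in\mathbb{R}^{n\times n}$ be diagonalizable with spectrum $\sigma(K)\subset(-\infty,0)$. Let $\mathcal{A}=I_m\otimes I_n-(I^{(-1)}D)\otimes K$ and $\mathcal{P}=I_m\otimes I_n-(SD)\otimes K$. Then $\mathcal{P}$ is nonsingular, $\mathcal{P}^{-1}\mathcal{A}$ has the eigenvalue $1$ with algebraic multiplicity at least $n(m-1)$ (at most $n$ eigenvalues, counted with multiplicity, differ from $1$), and $\sigma(\mathcal{P}^{-1}\mathcal{A})\subset[1,\infty)$.
   Context: $M\ge1$, $m=2M+1$, $h>0$, $T>0$. Sinc time points $t_j=\dfrac{T e^{jh}}{1+e^{jh}}$, $j=-M,\dots,M$. $D=h\,\mathrm{diag}\big(t_{-M}(T-t_{-M})/T,\dots,t_M(T-t_M)/T\big)$. $I^{(-1)}\in\mathbb{R}^{m\times m}$ is the Toeplitz matrix with entries $I^{(-1)}_{l,j}=\frac12+\int_0^{l-j}\frac{\sin(\pi t)}{\pi t}\,dt$. $S:=\frac12\big(I^{(-1)}-(I^{(-1)})^{\mathsf T}\big)$ (equivalently $S=I^{(-1)}-\frac12 e_me_m^{\mathsf T}$ with $e_m$ the all-ones vector). $\otimes$ is the Kronecker product and $I_p$ the $p\times p$ identity. *)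

theory Defs
  imports "HOL-Analysis.Analysis" "Jordan_Normal_Form.Jordan_Normal_Form"
begin

definition kron_mat :: "'a::times mat \<Rightarrow> 'a mat \<Rightarrow> 'a mat" where
  "kron_mat A B = mat (dim_row A * dim_row B) (dim_col A * dim_col B)
     (\<lambda>(i,j). A $$ (i div dim_row B, j div dim_col B) * B $$ (i mod dim_row B, j mod dim_col B))"

definition sinc_pt :: "real \<Rightarrow> real \<Rightarrow> int \<Rightarrow> real" where
  "sinc_pt T h j = T * exp (of_int j * h) / (1 + exp (of_int j * h))"

definition Si_pi :: "real \<Rightarrow> real" where
  "Si_pi x = (if 0 \<le> x then integral {0..x} (\<lambda>t. sin (pi * t) / (pi * t))
              else - integral {x..0} (\<lambda>t. sin (pi * t) / (pi * t)))"

text \<open>Matrix I^(-1) of size m = 2M+1; row/column index l corresponds to l - M.\<close>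
definition Im1_mat :: "nat \<Rightarrow> real mat" where
  "Im1_mat M = mat (2*M+1) (2*M+1) (\<lambda>(l,j). 1/2 + Si_pi (real_of_int (int l - int j)))"

definition S_mat :: "nat \<Rightarrow> real mat" where
  "S_mat M = (1/2) \<cdot>\<^sub>m (Im1_mat M - transpose_mat (Im1_mat M))"

definition D_mat :: "nat \<Rightarrow> real \<Rightarrow> real \<Rightarrow> real mat" where
  "D_mat M h T = mat (2*M+1) (2*M+1) (\<lambda>(l,j). if l = j then
      h * (sinc_pt T h (int l - int M) * (T - sinc_pt T h (int l - int M)) / T) else 0)"

definition A_mat :: "nat \<Rightarrow> real \<Rightarrow> real \<Rightarrow> real mat \<Rightarrow> real mat" where
  "A_mat M h T K = 1\<^sub>m ((2*M+1) * dim_row K) - kron_mat (Im1_mat M * D_mat M h T) K"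

definition P_mat :: "nat \<Rightarrow> real \<Rightarrow> real \<Rightarrow> real mat \<Rightarrow> real mat" where
  "P_mat M h T K = 1\<^sub>m ((2*M+1) * dim_row K) - kron_mat (S_mat M * D_mat M h T) K"

end

theory Submission
  imports Defs
begin

text \<open>
  Write \<open>D = diag d\<close> with \<open>d > 0\<close>, and \<open>I^(-1) = S + H\<close> with \<open>S\<close> skew-symmetric and
  \<open>H = e e^T / 2\<close>. Conjugation by \<open>I \<otimes> Q\<close>, where \<open>Q K Q^-1\<close> is diagonal, splits every
  equation for \<open>P\<close> and \<open>A\<close> into \<open>m \<times> m\<close> systems in which \<open>K\<close> is replaced by one of its
  eigenvalues \<open>\<lambda> < 0\<close>. Skew-symmetry gives the energy identity
  \<open>\<langle>D x, (I - \<lambda> S D) x\<rangle> = \<langle>D x, x\<rangle> > 0\<close> for real \<open>x \<noteq> 0\<close>, so \<open>P\<close> is nonsingular.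
  Since \<open>A = P - (H D) \<otimes> K\<close> and \<open>H D\<close> annihilates every vector orthogonal to \<open>d\<close>,
  \<open>P^-1 A\<close> fixes an \<open>n (m - 1)\<close>-dimensional space, which produces the factor
  \<open>(x - 1)^(n (m - 1))\<close> of its characteristic polynomial. An eigenvector for \<open>\<mu> \<noteq> 1\<close>
  rescales to a solution \<open>y\<close> of \<open>(I - \<lambda> S D) y = (\<lambda> / 2) e\<close>; such a \<open>y\<close> is real, and the
  energy identity becomes \<open>\<Sum> d y\<^sup>2 = (\<lambda> / 2) \<Sum> d y\<close>, whence \<open>\<mu> = 1 - \<Sum> d y > 1\<close>.
\<close>

section \<open>Kronecker products and diagonalisation\<close>

lemma sum_lessThan_mult_nat:
  "(\<Sum>t<p * q. f t) = (\<Sum>a<p. \<Sum>b<q. f (a * q + b :: nat))"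
proof (induction p)
  case 0 thus ?case by simp
next
  case (Suc p)
  have "(\<Sum>t<Suc p * q. f t) = (\<Sum>t<p * q. f t) + (\<Sum>t\<in>{p * q..<p * q + q}. f t)"
    by (simp add: sum.atLeastLessThan_concat[symmetric] lessThan_atLeast0 add.commute)
  also have "(\<Sum>t\<in>{p * q..<p * q + q}. f t) = (\<Sum>b<q. f (p * q + b))"
    by (rule sum.reindex_bij_witness[of _ "\<lambda>b. p * q + b" "\<lambda>t. t - p * q"]) auto
  finally show ?case using Suc by simp
qed

lemma div_mod_less_of_less_mult: "(i::nat) < a * b \<Longrightarrow> i div b < a \<and> i mod b < b"
  by (metis less_mult_imp_div_less mod_less_divisor mult_0_right not_gr_zero not_less_zero)

lemma mult_add_less_mult: "l < m \<Longrightarrow> k < n \<Longrightarrow> l * n + k < m * (n::nat)"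
  by (metis add.commute add_less_cancel_left mult.commute mult_Suc_right
      less_le_trans mult_le_mono1 Suc_leI)

lemma dim_kron_mat [simp]:
  "dim_row (kron_mat A B) = dim_row A * dim_row B"
  "dim_col (kron_mat A B) = dim_col A * dim_col B"
  unfolding kron_mat_def by simp_all

lemma index_kron_mat:
  "i < dim_row A * dim_row B \<Longrightarrow> j < dim_col A * dim_col B \<Longrightarrow>
   kron_mat A B $$ (i, j) = A $$ (i div dim_row B, j div dim_col B) * B $$ (i mod dim_row B, j mod dim_col B)"
  unfolding kron_mat_def by simp

lemma kron_mat_carrierI:
  "A \<in> carrier_mat a1 a2 \<Longrightarrow> B \<in> carrier_mat b1 b2 \<Longrightarrow> kron_mat A B \<in> carrier_mat (a1 * b1) (a2 * b2)"
  by auto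

lemma kron_mat_mult:
  fixes A B C D :: "'a::comm_semiring_1 mat"
  assumes A: "A \<in> carrier_mat a1 a2" and B: "B \<in> carrier_mat b1 b2"
    and C: "C \<in> carrier_mat a2 a3" and D: "D \<in> carrier_mat b2 b3"
  shows "kron_mat A B * kron_mat C D = kron_mat (A * C) (B * D)"
proof (rule eq_matI)
  fix i j assume "i < dim_row (kron_mat (A * C) (B * D))" "j < dim_col (kron_mat (A * C) (B * D))"
  hence i: "i < a1 * b1" and j: "j < a3 * b3" using A B C D by auto
  have "(kron_mat A B * kron_mat C D) $$ (i, j)
      = (\<Sum>t<a2 * b2. kron_mat A B $$ (i, t) * kron_mat C D $$ (t, j))"
    using A B C D i j by (simp add: scalar_prod_def lessThan_atLeast0)
  also have "\<dots> = (\<Sum>a<a2. \<Sum>b<b2. kron_mat A B $$ (i, a * b2 + b) * kron_mat C D $$ (a * b2 + b, j))"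
    by (rule sum_lessThan_mult_nat)
  also have "\<dots> = (\<Sum>a<a2. \<Sum>b<b2. (A $$ (i div b1, a) * C $$ (a, j div b3))
                                    * (B $$ (i mod b1, b) * D $$ (b, j mod b3)))"
  proof (intro sum.cong refl)
    fix a b assume "a \<in> {..<a2}" "b \<in> {..<b2}"
    hence "a * b2 + b < a2 * b2" "(a * b2 + b) div b2 = a" "(a * b2 + b) mod b2 = b"
      by (auto simp: mult_add_less_mult)
    thus "kron_mat A B $$ (i, a * b2 + b) * kron_mat C D $$ (a * b2 + b, j)
      = (A $$ (i div b1, a) * C $$ (a, j div b3)) * (B $$ (i mod b1, b) * D $$ (b, j mod b3))"
      using A B C D i j by (simp add: index_kron_mat mult_ac)
  qed
  also have "\<dots> = (\<Sum>a<a2. A $$ (i div b1, a) * C $$ (a, j div b3))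
                 * (\<Sum>b<b2. B $$ (i mod b1, b) * D $$ (b, j mod b3))"
    by (simp add: sum_product)
  also have "\<dots> = kron_mat (A * C) (B * D) $$ (i, j)"
    using A B C D i j div_mod_less_of_less_mult[OF i] div_mod_less_of_less_mult[OF j]
    by (simp add: index_kron_mat scalar_prod_def lessThan_atLeast0)
  finally show "(kron_mat A B * kron_mat C D) $$ (i, j) = kron_mat (A * C) (B * D) $$ (i, j)" .
qed (use A B C D in auto)

lemma kron_mat_add_left:
  fixes A B C :: "'a::semiring mat"
  assumes "A \<in> carrier_mat a1 a2" "B \<in> carrier_mat a1 a2"
  shows "kron_mat (A + B) C = kron_mat A C + kron_mat B C"
proof (rule eq_matI)
  fix i j assume "i < dim_row (kron_mat A C + kron_mat B C)" "j < dim_col (kron_mat A C + kron_mat B C)"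
  hence ij: "i < a1 * dim_row C" "j < a2 * dim_col C" using assms by auto
  thus "kron_mat (A + B) C $$ (i, j) = (kron_mat A C + kron_mat B C) $$ (i, j)"
    using assms div_mod_less_of_less_mult[OF ij(1)] div_mod_less_of_less_mult[OF ij(2)]
    by (simp add: index_kron_mat algebra_simps)
qed (use assms in auto)

lemma one_minus_kron_mat_add_left:
  fixes A B C :: "'a::comm_ring_1 mat"
  assumes A: "A \<in> carrier_mat m m" and B: "B \<in> carrier_mat m m" and C: "C \<in> carrier_mat n n"
  shows "1\<^sub>m (m * n) - kron_mat (A + B) C = (1\<^sub>m (m * n) - kron_mat A C) - kron_mat B C"
  unfolding kron_mat_add_left[OF A B] using A B C by (intro eq_matI) auto

lemma kron_mat_one: "kron_mat (1\<^sub>m a) (1\<^sub>m b) = (1\<^sub>m (a * b) :: 'a::semiring_1 mat)"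
proof (rule eq_matI)
  fix i j assume "i < dim_row (1\<^sub>m (a * b) :: 'a mat)" "j < dim_col (1\<^sub>m (a * b) :: 'a mat)"
  hence ij: "i < a * b" "j < a * b" by auto
  moreover have "(i = j) = (i div b = j div b \<and> i mod b = j mod b)"
    by (metis div_mult_mod_eq)
  ultimately show "kron_mat (1\<^sub>m a) (1\<^sub>m b) $$ (i, j) = (1\<^sub>m (a * b) :: 'a mat) $$ (i, j)"
    using div_mod_less_of_less_mult[OF ij(1)] div_mod_less_of_less_mult[OF ij(2)]
    by (simp add: index_kron_mat)
qed auto

lemma map_kron_mat:
  assumes "\<And>x y. f (x * y) = f x * f y"
  shows "map_mat f (kron_mat A B) = kron_mat (map_mat f A) (map_mat f B)"
proof (rule eq_matI)
  fix i j assume "i < dim_row (kron_mat (map_mat f A) (map_mat f B))"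
    "j < dim_col (kron_mat (map_mat f A) (map_mat f B))"
  hence ij: "i < dim_row A * dim_row B" "j < dim_col A * dim_col B" by auto
  thus "map_mat f (kron_mat A B) $$ (i, j) = kron_mat (map_mat f A) (map_mat f B) $$ (i, j)"
    using assms div_mod_less_of_less_mult[OF ij(1)] div_mod_less_of_less_mult[OF ij(2)]
    by (simp add: index_kron_mat)
qed auto

lemma upper_triangular_kron_mat:
  fixes A B :: "'a::semiring_0 mat"
  assumes A: "A \<in> carrier_mat a a" "upper_triangular A"
    and B: "B \<in> carrier_mat b b" "upper_triangular B"
  shows "upper_triangular (kron_mat A B)"
  unfolding upper_triangular_def
proof (intro allI impI)
  fix i j assume i: "i < dim_row (kron_mat A B)" and ji: "j < i"
  hence ij: "i < a * b" "j < a * b" using A B by auto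
  have "j div b < i div b \<or> (j div b = i div b \<and> j mod b < i mod b)"
    using ji by (metis div_le_mono div_mult_mod_eq le_neq_implies_less add_less_cancel_left
        less_imp_le_nat not_less)
  thus "kron_mat A B $$ (i, j) = 0"
    using A B ij div_mod_less_of_less_mult[OF ij(1)] div_mod_less_of_less_mult[OF ij(2)]
    by (auto simp: index_kron_mat upper_triangular_def)
qed

lemma kron_mat_diagonal_mult_vec:
  fixes C L :: "'a::comm_semiring_1 mat"
  assumes C: "C \<in> carrier_mat m m" and L: "L \<in> carrier_mat n n" and dL: "diagonal_mat L"
    and w: "w \<in> carrier_vec (m * n)" and l: "l < m" and k: "k < n"
  shows "(kron_mat C L *\<^sub>v w) $ (l * n + k) = L $$ (k, k) * (\<Sum>l'<m. C $$ (l, l') * w $ (l' * n + k))"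
proof -
  have i: "l * n + k < m * n" using l k by (rule mult_add_less_mult)
  have "(kron_mat C L *\<^sub>v w) $ (l * n + k) = (\<Sum>t<m * n. kron_mat C L $$ (l * n + k, t) * w $ t)"
    using C L w i by (simp add: scalar_prod_def lessThan_atLeast0)
  also have "\<dots> = (\<Sum>a<m. \<Sum>b<n. kron_mat C L $$ (l * n + k, a * n + b) * w $ (a * n + b))"
    by (rule sum_lessThan_mult_nat)
  also have "\<dots> = (\<Sum>a<m. \<Sum>b<n. if b = k then C $$ (l, a) * w $ (a * n + k) * L $$ (k, k) else 0)"
  proof (intro sum.cong refl)
    fix a b assume "a \<in> {..<m}" "b \<in> {..<n}"
    moreover have "L $$ (k, b) = 0" if "b \<noteq> k" "b < n"
      using dL L k that unfolding diagonal_mat_def by auto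
    ultimately show "kron_mat C L $$ (l * n + k, a * n + b) * w $ (a * n + b)
      = (if b = k then C $$ (l, a) * w $ (a * n + k) * L $$ (k, k) else 0)"
      using C L i k by (auto simp: index_kron_mat mult_add_less_mult mult_ac)
  qed
  also have "\<dots> = L $$ (k, k) * (\<Sum>l'<m. C $$ (l, l') * w $ (l' * n + k))"
    using k by (simp add: sum_distrib_left mult_ac)
  finally show ?thesis .
qed

lemma kron_mat_intertwine_mult_vec:
  fixes C K L Q :: "'a::comm_semiring_1 mat"
  assumes C: "C \<in> carrier_mat m m" and K: "K \<in> carrier_mat n n" and L: "L \<in> carrier_mat n n"
    and Q: "Q \<in> carrier_mat n n" and QK: "Q * K = L * Q" and v: "v \<in> carrier_vec (m * n)"
  shows "kron_mat (1\<^sub>m m) Q *\<^sub>v (kron_mat C K *\<^sub>v v) = kron_mat C L *\<^sub>v (kron_mat (1\<^sub>m m) Q *\<^sub>v v)"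
proof -
  have G: "kron_mat (1\<^sub>m m) Q \<in> carrier_mat (m * n) (m * n)" by (rule kron_mat_carrierI[OF one_carrier_mat Q])
  have "kron_mat (1\<^sub>m m) Q * kron_mat C K = kron_mat (1\<^sub>m m * C) (Q * K)"
    by (rule kron_mat_mult[OF one_carrier_mat Q C K])
  also have "\<dots> = kron_mat (C * 1\<^sub>m m) (L * Q)" using C QK by simp
  also have "\<dots> = kron_mat C L * kron_mat (1\<^sub>m m) Q"
    by (rule kron_mat_mult[OF C L one_carrier_mat Q, symmetric])
  finally show ?thesis
    using assoc_mult_mat_vec[OF G kron_mat_carrierI[OF C K] v]
      assoc_mult_mat_vec[OF kron_mat_carrierI[OF C L] G v] by simp
qed

lemma kron_mat_diagonal_decouple:
  fixes L C1 C2 :: "'a::comm_ring_1 mat" and w :: "'a vec"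
  assumes L: "L \<in> carrier_mat n n" and dL: "diagonal_mat L"
    and C1: "C1 \<in> carrier_mat m m" and C2: "C2 \<in> carrier_mat m m"
    and w: "w \<in> carrier_vec (m * n)" and w0: "w \<noteq> 0\<^sub>v (m * n)"
    and eq: "\<alpha> \<cdot>\<^sub>v (w - kron_mat C1 L *\<^sub>v w) = \<beta> \<cdot>\<^sub>v (kron_mat C2 L *\<^sub>v w)"
  shows "\<exists>k<n. \<exists>W. (\<exists>l<m. W l \<noteq> 0) \<and>
     (\<forall>l<m. \<alpha> * (W l - L $$ (k, k) * (\<Sum>l'<m. C1 $$ (l, l') * W l'))
           = \<beta> * (L $$ (k, k) * (\<Sum>l'<m. C2 $$ (l, l') * W l')))"
proof -
  obtain i where i: "i < m * n" and wi: "w $ i \<noteq> 0" using w w0 by (metis carrier_vecD eq_vecI index_zero_vec)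
  define k where "k = i mod n"
  define W where "W l = w $ (l * n + k)" for l
  have k: "k < n" and "i div n < m" using div_mod_less_of_less_mult[OF i] unfolding k_def by auto
  moreover have "W (i div n) \<noteq> 0" using wi unfolding W_def k_def by simp
  moreover have "\<alpha> * (W l - L $$ (k, k) * (\<Sum>l'<m. C1 $$ (l, l') * W l'))
      = \<beta> * (L $$ (k, k) * (\<Sum>l'<m. C2 $$ (l, l') * W l'))" if l: "l < m" for l
  proof -
    have "(\<alpha> \<cdot>\<^sub>v (w - kron_mat C1 L *\<^sub>v w)) $ (l * n + k) = (\<beta> \<cdot>\<^sub>v (kron_mat C2 L *\<^sub>v w)) $ (l * n + k)"
      using eq by simp
    thus ?thesis using mult_add_less_mult[OF l k] w C1 C2 L
      by (simp add: kron_mat_diagonal_mult_vec[OF C1 L dL w l k]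
          kron_mat_diagonal_mult_vec[OF C2 L dL w l k] W_def)
  qed
  ultimately show ?thesis by blast
qed

lemma eigenvalue_similar_diagonal_entry:
  fixes K L :: "'a::field mat"
  assumes K: "K \<in> carrier_mat n n" and sim: "similar_mat K L" and dL: "diagonal_mat L" and k: "k < n"
  shows "eigenvalue K (L $$ (k, k))"
proof -
  from similar_matD[OF sim] K have L: "L \<in> carrier_mat n n" by auto
  have "upper_triangular L" using dL L unfolding diagonal_mat_def upper_triangular_def by auto
  hence "char_poly L = (\<Prod>a\<leftarrow>diag_mat L. [:- a, 1:])" by (rule char_poly_upper_triangular[OF L])
  moreover have "L $$ (k, k) \<in> set (diag_mat L)" using L k unfolding diag_mat_def by auto
  ultimately have "poly (char_poly L) (L $$ (k, k)) = 0"
    by (force simp: poly_prod_list prod_list_zero_iff)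
  thus ?thesis unfolding eigenvalue_root_char_poly[OF K] char_poly_similar[OF sim] .
qed

lemma kron_mat_similar_diagonal_decouple:
  fixes K L C1 C2 :: "'a::field mat" and v :: "'a vec"
  assumes K: "K \<in> carrier_mat n n" and sim: "similar_mat K L" and dL: "diagonal_mat L"
    and C1: "C1 \<in> carrier_mat m m" and C2: "C2 \<in> carrier_mat m m"
    and v: "v \<in> carrier_vec (m * n)" and v0: "v \<noteq> 0\<^sub>v (m * n)"
    and eq: "\<alpha> \<cdot>\<^sub>v (v - kron_mat C1 K *\<^sub>v v) = \<beta> \<cdot>\<^sub>v (kron_mat C2 K *\<^sub>v v)"
  shows "\<exists>k<n. \<exists>W. (\<exists>l<m. W l \<noteq> 0) \<and> eigenvalue K (L $$ (k, k)) \<and>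
     (\<forall>l<m. \<alpha> * (W l - L $$ (k, k) * (\<Sum>l'<m. C1 $$ (l, l') * W l'))
           = \<beta> * (L $$ (k, k) * (\<Sum>l'<m. C2 $$ (l, l') * W l')))"
proof -
  from similar_matD[OF sim] obtain n' P Q where carr: "{K, L, P, Q} \<subseteq> carrier_mat n' n'"
    and PQ: "P * Q = 1\<^sub>m n'" and QP: "Q * P = 1\<^sub>m n'" and KPLQ: "K = P * L * Q" by blast
  have "n' = n" using carr K by auto
  hence L: "L \<in> carrier_mat n n" and P: "P \<in> carrier_mat n n" and Q: "Q \<in> carrier_mat n n"
    and PQ: "P * Q = 1\<^sub>m n" and QP: "Q * P = 1\<^sub>m n" using carr PQ QP by auto
  have "Q * K = (Q * P) * L * Q"
    unfolding KPLQ using Q P L by (simp add: assoc_mult_mat[of _ n n _ n _ n])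
  hence QK: "Q * K = L * Q" using QP L by simp
  define G where "G = kron_mat (1\<^sub>m m) Q"
  have G: "G \<in> carrier_mat (m * n) (m * n)" unfolding G_def using Q by auto
  have Kv: "kron_mat C K *\<^sub>v v \<in> carrier_vec (m * n)" if "C \<in> carrier_mat m m" for C
    by (rule mult_mat_vec_carrier[OF kron_mat_carrierI[OF that K] v])
  note G_kron = kron_mat_intertwine_mult_vec[OF _ K L Q QK v, folded G_def]
  have "G *\<^sub>v (\<alpha> \<cdot>\<^sub>v (v - kron_mat C1 K *\<^sub>v v)) = \<alpha> \<cdot>\<^sub>v (G *\<^sub>v v - kron_mat C1 L *\<^sub>v (G *\<^sub>v v))"
    using v Kv[OF C1] by (simp add: mult_mat_vec[OF G] mult_minus_distrib_mat_vec[OF G] G_kron[OF C1])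
  moreover have "G *\<^sub>v (\<beta> \<cdot>\<^sub>v (kron_mat C2 K *\<^sub>v v)) = \<beta> \<cdot>\<^sub>v (kron_mat C2 L *\<^sub>v (G *\<^sub>v v))"
    using Kv[OF C2] by (simp add: mult_mat_vec[OF G] G_kron[OF C2])
  ultimately have eqw: "\<alpha> \<cdot>\<^sub>v (G *\<^sub>v v - kron_mat C1 L *\<^sub>v (G *\<^sub>v v)) = \<beta> \<cdot>\<^sub>v (kron_mat C2 L *\<^sub>v (G *\<^sub>v v))"
    using eq by simp
  have "kron_mat (1\<^sub>m m) P * G = 1\<^sub>m (m * n)"
    unfolding G_def kron_mat_mult[OF one_carrier_mat P one_carrier_mat Q] PQ by (simp add: kron_mat_one)
  hence PG_v: "kron_mat (1\<^sub>m m) P *\<^sub>v (G *\<^sub>v v) = v"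
    using assoc_mult_mat_vec[OF kron_mat_carrierI[OF one_carrier_mat P] G v] v by simp
  have "G *\<^sub>v v \<noteq> 0\<^sub>v (m * n)"
  proof
    assume "G *\<^sub>v v = 0\<^sub>v (m * n)"
    hence "v = kron_mat (1\<^sub>m m) P *\<^sub>v 0\<^sub>v (m * n)" using PG_v by simp
    also have "\<dots> = 0\<^sub>v (m * n)" using P by (intro eq_vecI) (auto simp: scalar_prod_def)
    finally show False using v0 by simp
  qed
  from kron_mat_diagonal_decouple[OF L dL C1 C2 _ this eqw] G v
    eigenvalue_similar_diagonal_entry[OF K sim dL]
  show ?thesis by auto
qed

section \<open>Linear systems with a skew-symmetric matrix\<close>

lemma skew_form_self_zero:
  fixes a :: "nat \<Rightarrow> 'a::field_char_0" and s :: "nat \<Rightarrow> nat \<Rightarrow> 'a"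
  assumes skew: "\<forall>l<m. \<forall>j<m. s l j = - s j l"
  shows "(\<Sum>l<m. \<Sum>j<m. a l * s l j * a j) = 0"
proof -
  let ?Q = "\<Sum>l<m. \<Sum>j<m. a l * s l j * a j"
  have "?Q = (\<Sum>j<m. \<Sum>l<m. a l * s l j * a j)" by (rule sum.swap)
  also have "\<dots> = (\<Sum>j<m. \<Sum>l<m. - (a j * s j l * a l))"
  proof (intro sum.cong refl)
    fix j l assume "j \<in> {..<m}" "l \<in> {..<m}"
    hence "s l j = - s j l" using skew by blast
    thus "a l * s l j * a j = - (a j * s j l * a l)" by (simp add: algebra_simps)
  qed
  also have "\<dots> = - ?Q" by (simp add: sum_negf)
  finally show ?thesis by simp
qed

lemma skew_system_energy:
  fixes s :: "nat \<Rightarrow> nat \<Rightarrow> real" and d x :: "nat \<Rightarrow> real"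
  assumes skew: "\<forall>l<m. \<forall>j<m. s l j = - s j l"
  shows "(\<Sum>l<m. d l * x l * (x l - lam * (\<Sum>j<m. s l j * d j * x j))) = (\<Sum>l<m. d l * x l ^ 2)"
proof -
  have "(\<Sum>l<m. d l * x l * (x l - lam * (\<Sum>j<m. s l j * d j * x j)))
     = (\<Sum>l<m. d l * x l ^ 2) - lam * (\<Sum>l<m. \<Sum>j<m. (d l * x l) * s l j * (d j * x j))"
    by (simp add: algebra_simps power2_eq_square sum_subtractf sum_distrib_left sum_distrib_right)
  also have "(\<Sum>l<m. \<Sum>j<m. (d l * x l) * s l j * (d j * x j)) = 0"
    by (rule skew_form_self_zero[OF skew])
  finally show ?thesis by simp
qed

lemma weighted_squares_pos:
  fixes d x :: "nat \<Rightarrow> real"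
  assumes dpos: "\<forall>l<m. d l > 0" and "l0 < m" and "x l0 \<noteq> 0"
  shows "(\<Sum>l<m. d l * x l ^ 2) > 0"
proof -
  have "0 < d l0 * x l0 ^ 2" using assms by simp
  also have "\<dots> \<le> (\<Sum>l<m. d l * x l ^ 2)"
    using assms by (intro member_le_sum) (auto intro: mult_nonneg_nonneg less_imp_le)
  finally show ?thesis .
qed

lemma skew_system_unique_real:
  fixes s :: "nat \<Rightarrow> nat \<Rightarrow> real" and d x :: "nat \<Rightarrow> real"
  assumes skew: "\<forall>l<m. \<forall>j<m. s l j = - s j l" and dpos: "\<forall>l<m. d l > 0"
    and hom: "\<forall>l<m. x l - lam * (\<Sum>j<m. s l j * d j * x j) = 0"
  shows "\<forall>l<m. x l = 0"
proof (rule ccontr)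
  assume "\<not> (\<forall>l<m. x l = 0)"
  then obtain l0 where "l0 < m" "x l0 \<noteq> 0" by blast
  hence "(\<Sum>l<m. d l * x l ^ 2) > 0" by (rule weighted_squares_pos[OF dpos])
  moreover have "(\<Sum>l<m. d l * x l ^ 2) = 0"
    using skew_system_energy[OF skew, of d x lam] hom by simp
  ultimately show False by simp
qed

lemma Re_Im_of_real_system:
  fixes s :: "nat \<Rightarrow> nat \<Rightarrow> real" and d :: "nat \<Rightarrow> real" and y :: "nat \<Rightarrow> complex"
  shows "Re (y l - of_real lam * (\<Sum>j<m. of_real (s l j * d j) * y j))
           = Re (y l) - lam * (\<Sum>j<m. s l j * d j * Re (y j))"
    and "Im (y l - of_real lam * (\<Sum>j<m. of_real (s l j * d j) * y j))
           = Im (y l) - lam * (\<Sum>j<m. s l j * d j * Im (y j))"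
  by (simp_all add: Re_sum Im_sum)

lemma skew_system_unique_complex:
  fixes s :: "nat \<Rightarrow> nat \<Rightarrow> real" and d :: "nat \<Rightarrow> real" and w :: "nat \<Rightarrow> complex"
  assumes skew: "\<forall>l<m. \<forall>j<m. s l j = - s j l" and dpos: "\<forall>l<m. d l > 0"
    and hom: "\<forall>l<m. w l - of_real lam * (\<Sum>j<m. of_real (s l j * d j) * w j) = 0"
  shows "\<forall>l<m. w l = 0"
proof -
  have "\<forall>l<m. Re (w l) = 0"
  proof (rule skew_system_unique_real[OF skew dpos], intro allI impI)
    fix l assume "l < m"
    hence "Re (w l - of_real lam * (\<Sum>j<m. of_real (s l j * d j) * w j)) = 0" using hom by simp
    thus "Re (w l) - lam * (\<Sum>j<m. s l j * d j * Re (w j)) = 0" unfolding Re_Im_of_real_system .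
  qed
  moreover have "\<forall>l<m. Im (w l) = 0"
  proof (rule skew_system_unique_real[OF skew dpos], intro allI impI)
    fix l assume "l < m"
    hence "Im (w l - of_real lam * (\<Sum>j<m. of_real (s l j * d j) * w j)) = 0" using hom by simp
    thus "Im (w l) - lam * (\<Sum>j<m. s l j * d j * Im (w j)) = 0" unfolding Re_Im_of_real_system .
  qed
  ultimately show ?thesis by (auto simp: complex_eq_iff)
qed

lemma skew_system_real_rhs_solution_real:
  fixes s :: "nat \<Rightarrow> nat \<Rightarrow> real" and d r :: "nat \<Rightarrow> real" and y :: "nat \<Rightarrow> complex"
  assumes skew: "\<forall>l<m. \<forall>j<m. s l j = - s j l" and dpos: "\<forall>l<m. d l > 0"
    and eq: "\<forall>l<m. y l - of_real lam * (\<Sum>j<m. of_real (s l j * d j) * y j) = of_real (r l)"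
  shows "\<forall>l<m. y l = of_real (Re (y l))"
proof -
  have "\<forall>l<m. Im (y l) = 0"
  proof (rule skew_system_unique_real[OF skew dpos], intro allI impI)
    fix l assume "l < m"
    hence "Im (y l - of_real lam * (\<Sum>j<m. of_real (s l j * d j) * y j)) = 0" using eq by simp
    thus "Im (y l) - lam * (\<Sum>j<m. s l j * d j * Im (y j)) = 0" unfolding Re_Im_of_real_system .
  qed
  thus ?thesis by (simp add: complex_eq_iff)
qed

lemma skew_system_constant_rhs_neg:
  fixes s :: "nat \<Rightarrow> nat \<Rightarrow> real" and d r :: "nat \<Rightarrow> real"
  assumes skew: "\<forall>l<m. \<forall>j<m. s l j = - s j l" and dpos: "\<forall>l<m. d l > 0"
    and lam: "lam < 0" and "m > 0"
    and eq: "\<forall>l<m. r l - lam * (\<Sum>j<m. s l j * d j * r j) = lam / 2"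
  shows "(\<Sum>l<m. d l * r l) < 0"
proof -
  have "(\<Sum>l<m. d l * r l ^ 2) = (\<Sum>l<m. d l * r l * (lam / 2))"
    using skew_system_energy[OF skew, of d r lam] eq by simp
  also have "\<dots> = lam / 2 * (\<Sum>l<m. d l * r l)" by (simp add: sum_distrib_left mult.commute)
  finally have energy: "(\<Sum>l<m. d l * r l ^ 2) = lam / 2 * (\<Sum>l<m. d l * r l)" .
  have "\<exists>l<m. r l \<noteq> 0"
  proof (rule ccontr)
    assume "\<not> (\<exists>l<m. r l \<noteq> 0)"
    with eq \<open>m > 0\<close> lam show False by auto
  qed
  then obtain l0 where "l0 < m" "r l0 \<noteq> 0" by blast
  hence "lam / 2 * (\<Sum>l<m. d l * r l) > 0"
    using weighted_squares_pos[OF dpos] energy by metis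
  thus ?thesis using lam by (simp add: zero_less_mult_iff)
qed

lemma skew_pencil_eigenvalue_ge_one:
  fixes s :: "nat \<Rightarrow> nat \<Rightarrow> real" and d :: "nat \<Rightarrow> real" and w :: "nat \<Rightarrow> complex"
  assumes skew: "\<forall>l<m. \<forall>j<m. s l j = - s j l" and dpos: "\<forall>l<m. d l > 0"
    and lam: "lam < 0" and nz: "\<exists>l<m. w l \<noteq> 0"
    and eq: "\<forall>l<m. (1 - \<mu>) * (w l - of_real lam * (\<Sum>j<m. of_real (s l j * d j) * w j))
                  = of_real (lam / 2) * (\<Sum>j<m. of_real (d j) * w j)"
  shows "\<mu> \<in> \<real> \<and> 1 \<le> Re \<mu>"
proof (cases "\<mu> = 1")
  case True thus ?thesis by simp
next
  case False
  define \<sigma> where "\<sigma> = (\<Sum>j<m. of_real (d j) * w j)"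
  have \<sigma>: "\<sigma> \<noteq> 0"
  proof
    assume "\<sigma> = 0"
    hence "\<forall>l<m. w l - of_real lam * (\<Sum>j<m. of_real (s l j * d j) * w j) = 0"
      using eq False unfolding \<sigma>_def by auto
    from skew_system_unique_complex[OF skew dpos this] nz show False by blast
  qed
  \<comment> \<open>Rescaling \<open>w\<close> turns the right-hand side into the real constant \<open>lam / 2\<close>.\<close>
  define \<rho> where "\<rho> = (1 - \<mu>) / \<sigma>"
  define y where "y l = \<rho> * w l" for l
  have eqy: "y l - of_real lam * (\<Sum>j<m. of_real (s l j * d j) * y j) = of_real (lam / 2)"
    if "l < m" for l
  proof -
    have "y l - of_real lam * (\<Sum>j<m. of_real (s l j * d j) * y j)
        = \<rho> * (w l - of_real lam * (\<Sum>j<m. of_real (s l j * d j) * w j))"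
      unfolding y_def by (simp add: sum_distrib_left algebra_simps)
    also have "\<dots> = of_real (lam / 2)" using eq that \<sigma> unfolding \<rho>_def \<sigma>_def by simp
    finally show ?thesis .
  qed
  have y_real: "\<forall>l<m. y l = of_real (Re (y l))"
    using eqy by (intro skew_system_real_rhs_solution_real[OF skew dpos, where r = "\<lambda>_. lam / 2" and lam = lam]) simp
  have "(\<Sum>j<m. of_real (d j) * y j) = \<rho> * \<sigma>"
    unfolding y_def \<sigma>_def by (simp add: sum_distrib_left algebra_simps)
  also have "\<dots> = 1 - \<mu>" using \<sigma> unfolding \<rho>_def by simp
  finally have \<mu>_eq: "\<mu> = of_real (1 - (\<Sum>j<m. d j * Re (y j)))"
    using y_real by (simp add: algebra_simps)
  have "(\<Sum>j<m. d j * Re (y j)) < 0"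
  proof (rule skew_system_constant_rhs_neg[OF skew dpos lam])
    show "m > 0" using nz by auto
    show "\<forall>l<m. Re (y l) - lam * (\<Sum>j<m. s l j * d j * Re (y j)) = lam / 2"
    proof (intro allI impI)
      fix l assume "l < m"
      hence "Re (y l - of_real lam * (\<Sum>j<m. of_real (s l j * d j) * y j)) = lam / 2" by (simp only: eqy) simp
      thus "Re (y l) - lam * (\<Sum>j<m. s l j * d j * Re (y j)) = lam / 2" unfolding Re_Im_of_real_system .
    qed
  qed
  thus ?thesis using \<mu>_eq by simp
qed

section \<open>Multiplicity of the eigenvalue one\<close>

interpretation const_poly_hom: comm_ring_hom "\<lambda>a::'a::comm_ring_1. [:a:]"
  by unfold_locales (auto simp: one_pCons)

lemma det_mat_diag_step:
  fixes p :: "'a::comm_ring_1"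
  shows "det (mat_diag N (\<lambda>j. if j < s then 1 else p)) = p ^ (N - s)"
proof -
  define f where "f j = (if j < s then 1 else p)" for j
  have "det (mat_diag N f) = prod_list (diag_mat (mat_diag N f))"
    by (rule det_upper_triangular[OF _ mat_diag_dim]) (auto simp: upper_triangular_def mat_diag_def)
  also have "diag_mat (mat_diag N f) = map f [0..<N]"
    unfolding diag_mat_def mat_diag_def by auto
  also have "prod_list (map f [0..<N]) = (\<Prod>j\<in>{0..<N}. f j)"
    using prod.distinct_set_conv_list[of "[0..<N]" f] by simp
  also have "\<dots> = (\<Prod>j\<in>{s..<N}. p)"
    unfolding f_def by (intro prod.mono_neutral_cong_right) auto
  also have "\<dots> = p ^ (N - s)" by simp
  finally show ?thesis unfolding f_def .
qed

lemma char_poly_matrix_mult_const_index: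
  fixes X Q :: "'a::comm_ring_1 mat"
  assumes X: "X \<in> carrier_mat N N" and Q: "Q \<in> carrier_mat N N" and i: "i < N" and j: "j < N"
  shows "(char_poly_matrix X * map_mat (\<lambda>a. [:a:]) Q) $$ (i, j)
       = [:0, 1:] * [:Q $$ (i, j):] - [:(X * Q) $$ (i, j):]"
proof -
  have "(char_poly_matrix X * map_mat (\<lambda>a. [:a:]) Q) $$ (i, j)
      = (\<Sum>t<N. char_poly_matrix X $$ (i, t) * [:Q $$ (t, j):])"
    using Q i j carrier_matD[OF char_poly_matrix_closed[OF X]]
    by (simp add: scalar_prod_def lessThan_atLeast0)
  also have "\<dots> = (\<Sum>t<N. (if t = i then [:0, 1:] * [:Q $$ (t, j):] else 0) - [:X $$ (i, t) * Q $$ (t, j):])"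
    unfolding char_poly_matrix_def using X Q i j by (intro sum.cong refl) (auto simp: algebra_simps)
  also have "\<dots> = [:0, 1:] * [:Q $$ (i, j):] - [:(X * Q) $$ (i, j):]"
    using X Q i j by (simp add: sum_subtractf scalar_prod_def lessThan_atLeast0 const_poly_hom.hom_sum)
  finally show ?thesis .
qed

lemma order_one_char_poly_ge_fixed_columns:
  fixes X Q :: "'a::field mat"
  assumes X: "X \<in> carrier_mat N N" and Q: "Q \<in> carrier_mat N N" and detQ: "det Q \<noteq> 0"
    and fixed: "\<And>i j. i < N \<Longrightarrow> j < N \<Longrightarrow> s \<le> j \<Longrightarrow> (X * Q) $$ (i, j) = Q $$ (i, j)"
  shows "N - s \<le> order 1 (char_poly X)"
proof -
  define p :: "'a poly" where "p = [:-1, 1:]"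
  define C where "C = char_poly_matrix X"
  define Qp where "Qp = map_mat (\<lambda>a. [:a:]) Q"
  have C: "C \<in> carrier_mat N N" unfolding C_def using X by simp
  have Qp: "Qp \<in> carrier_mat N N" unfolding Qp_def using Q by simp
  note CQ = char_poly_matrix_mult_const_index[OF X Q, folded C_def Qp_def]
  \<comment> \<open>The columns \<open>j \<ge> s\<close> of \<open>C * Qp\<close> are \<open>p\<close> times those of \<open>Qp\<close>, so \<open>p\<close> can be pulled out of each.\<close>
  define W where "W = mat N N (\<lambda>(i, j). if j < s then (C * Qp) $$ (i, j) else Qp $$ (i, j))"
  have W: "W \<in> carrier_mat N N" unfolding W_def by simp
  have "C * Qp = W * mat_diag N (\<lambda>j. if j < s then 1 else p)"
    unfolding mat_diag_mult_right[OF W]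
  proof (rule eq_matI)
    fix i j assume "i < dim_row (mat N N (\<lambda>(i, j). W $$ (i, j) * (if j < s then 1 else p)))"
      "j < dim_col (mat N N (\<lambda>(i, j). W $$ (i, j) * (if j < s then 1 else p)))"
    hence i: "i < N" and j: "j < N" by auto
    show "(C * Qp) $$ (i, j) = mat N N (\<lambda>(i, j). W $$ (i, j) * (if j < s then 1 else p)) $$ (i, j)"
      using i j CQ[OF i j] fixed[OF i j] unfolding W_def Qp_def p_def
      by (auto simp: Q[THEN carrier_matD(1)] Q[THEN carrier_matD(2)] algebra_simps)
  qed (use C Qp in auto)
  hence "det (C * Qp) = det W * det (mat_diag N (\<lambda>j. if j < s then 1 else p))"
    by (simp add: det_mult[OF W mat_diag_dim])
  also have "det (mat_diag N (\<lambda>j. if j < s then 1 else p)) = p ^ (N - s)"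
    by (rule det_mat_diag_step)
  moreover have "det (C * Qp) = char_poly X * [:det Q:]"
    unfolding char_poly_def C_def[symmetric] Qp_def const_poly_hom.hom_det[symmetric]
    by (rule det_mult[OF C Qp[unfolded Qp_def]])
  ultimately have "char_poly X * [:det Q:] = det W * p ^ (N - s)" by simp
  hence "p ^ (N - s) dvd char_poly X * [:det Q:]" by (metis dvd_triv_right)
  moreover have "is_unit [:det Q:]" using detQ by (simp add: is_unit_const_poly_iff)
  ultimately have "p ^ (N - s) dvd char_poly X" using dvd_mult_unit_iff by blast
  moreover have "char_poly X \<noteq> 0" using degree_monic_char_poly[OF X] by auto
  ultimately show ?thesis using order_divides[of 1 "N - s" "char_poly X"] unfolding p_def by blast
qed

text \<open>For \<open>d 0 \<noteq> 0\<close>, columns \<open>1, \<dots>, m - 1\<close> form a basis of the orthogonal complement of \<open>d\<close>.\<close>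

definition weight_perp_basis :: "nat \<Rightarrow> (nat \<Rightarrow> 'a::ring_1) \<Rightarrow> 'a mat" where
  "weight_perp_basis m d = mat m m (\<lambda>(a, l).
     if l = 0 then (if a = 0 then 1 else 0)
     else if a = l then d 0 else if a = 0 then - d l else 0)"

lemma weight_perp_basis_carrier [simp]: "weight_perp_basis m d \<in> carrier_mat m m"
  unfolding weight_perp_basis_def by simp

lemma dim_weight_perp_basis [simp]:
  "dim_row (weight_perp_basis m d) = m" "dim_col (weight_perp_basis m d) = m"
  unfolding weight_perp_basis_def by simp_all

lemma upper_triangular_weight_perp_basis: "upper_triangular (weight_perp_basis m d)"
  unfolding upper_triangular_def weight_perp_basis_def by auto

lemma weight_perp_basis_orthogonal:
  fixes d :: "nat \<Rightarrow> 'a::comm_ring_1"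
  assumes "0 < l" "l < m"
  shows "(\<Sum>b<m. d b * weight_perp_basis m d $$ (b, l)) = 0"
proof -
  have "(\<Sum>b<m. d b * weight_perp_basis m d $$ (b, l))
      = (\<Sum>b<m. (if b = l then d l * d 0 else 0) + (if b = 0 then - d 0 * d l else 0))"
    using assms by (intro sum.cong refl) (auto simp: weight_perp_basis_def)
  also have "\<dots> = 0" using assms by (simp add: sum.distrib)
  finally show ?thesis .
qed

lemma const_mult_diag_mult_weight_perp_basis:
  fixes d :: "nat \<Rightarrow> 'a::comm_ring_1"
  assumes "a < m" "0 < l" "l < m"
  shows "(mat m m (\<lambda>_. c) * mat_diag m d * weight_perp_basis m d) $$ (a, l) = 0"
proof -
  have "(mat m m (\<lambda>_. c) * mat_diag m d * weight_perp_basis m d) $$ (a, l)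
      = c * (\<Sum>b<m. d b * weight_perp_basis m d $$ (b, l))"
    using assms by (simp add: mat_diag_mult_right[of _ m m] scalar_prod_def lessThan_atLeast0
        sum_distrib_left mult.assoc)
  thus ?thesis using weight_perp_basis_orthogonal[OF assms(2,3), of d] by simp
qed

lemma det_kron_weight_perp_basis_ne_zero:
  fixes d :: "nat \<Rightarrow> 'a::field"
  assumes "d 0 \<noteq> 0"
  shows "det (kron_mat (weight_perp_basis m d) (1\<^sub>m n)) \<noteq> 0"
proof -
  let ?Q = "kron_mat (weight_perp_basis m d) (1\<^sub>m n)"
  have Q: "?Q \<in> carrier_mat (m * n) (m * n)"
    by (rule kron_mat_carrierI[OF weight_perp_basis_carrier one_carrier_mat])
  have "upper_triangular ?Q"
    by (rule upper_triangular_kron_mat) (auto simp: upper_triangular_weight_perp_basis)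
  hence "det ?Q = prod_list (diag_mat ?Q)" by (rule det_upper_triangular[OF _ Q])
  moreover have "0 \<notin> set (diag_mat ?Q)"
    using assms div_mod_less_of_less_mult
    by (auto simp: diag_mat_def index_kron_mat weight_perp_basis_def)
  ultimately show ?thesis by (simp add: prod_list_zero_iff)
qed

lemma kron_const_diag_mult_weight_perp_basis_eq_0:
  fixes K :: "'a::comm_ring_1 mat" and d :: "nat \<Rightarrow> 'a"
  assumes K: "K \<in> carrier_mat n n" and t: "t < m * n" and j: "j < m * n" "n \<le> j"
  shows "(kron_mat (mat m m (\<lambda>_. c) * mat_diag m d) K * kron_mat (weight_perp_basis m d) (1\<^sub>m n)) $$ (t, j) = 0"
proof -
  have JD: "mat m m (\<lambda>_. c) * mat_diag m d \<in> carrier_mat m m"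
    by (rule mult_carrier_mat[OF mat_carrier mat_diag_dim])
  have "0 < j div n" "j div n < m" "t div n < m"
    using t j div_mod_less_of_less_mult[of t m n] div_mod_less_of_less_mult[of j m n]
    by (auto simp: div_greater_zero_iff)
  hence "(mat m m (\<lambda>_. c) * mat_diag m d * weight_perp_basis m d) $$ (t div n, j div n) = 0"
    by (intro const_mult_diag_mult_weight_perp_basis)
  thus ?thesis
    using t j K carrier_matD[OF JD]
    unfolding kron_mat_mult[OF JD K weight_perp_basis_carrier one_carrier_mat]
    by (simp add: index_kron_mat)
qed

lemma order_one_char_poly_left_inverse_ge:
  fixes Pinv P Z Q :: "'a::field mat"
  assumes Pinv: "Pinv \<in> carrier_mat N N" and P: "P \<in> carrier_mat N N" and Z: "Z \<in> carrier_mat N N"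
    and Q: "Q \<in> carrier_mat N N" and inv: "Pinv * P = 1\<^sub>m N" and detQ: "det Q \<noteq> 0"
    and ZQ: "\<And>i j. i < N \<Longrightarrow> j < N \<Longrightarrow> s \<le> j \<Longrightarrow> (Z * Q) $$ (i, j) = 0"
  shows "N - s \<le> order 1 (char_poly (Pinv * (P - Z)))"
proof (rule order_one_char_poly_ge_fixed_columns[OF _ Q detQ])
  show "Pinv * (P - Z) \<in> carrier_mat N N" using Pinv Z by (auto intro: minus_carrier_mat)
  have "Pinv * (P - Z) * Q = (Pinv * P - Pinv * Z) * Q"
    using Pinv P Z by (simp add: mult_minus_distrib_mat[of _ N N])
  also have "\<dots> = Q - Pinv * (Z * Q)"
    using Pinv P Z Q inv by (simp add: minus_mult_distrib_mat[of _ N N] assoc_mult_mat[of _ N N _ N _ N])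
  finally have PZQ: "Pinv * (P - Z) * Q = Q - Pinv * (Z * Q)" .
  fix i j assume ij: "i < N" "j < N" "s \<le> j"
  hence "(Pinv * (Z * Q)) $$ (i, j) = 0"
    using Pinv Z Q ZQ by (simp add: scalar_prod_def lessThan_atLeast0)
  thus "(Pinv * (P - Z) * Q) $$ (i, j) = Q $$ (i, j)"
    unfolding PZQ using ij carrier_matD[OF Pinv] carrier_matD[OF Q] by simp
qed

lemma order_one_char_poly_ge_rank_one_kron:
  fixes m n :: nat and S K Pinv :: "'a::field mat" and d :: "nat \<Rightarrow> 'a" and c :: 'a
  defines "D \<equiv> mat_diag m d" and "J \<equiv> mat m m (\<lambda>_. c)"
  assumes S: "S \<in> carrier_mat m m" and K: "K \<in> carrier_mat n n" and d0: "d 0 \<noteq> 0"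
    and Pinv: "Pinv \<in> carrier_mat (m * n) (m * n)"
    and inv: "Pinv * (1\<^sub>m (m * n) - kron_mat (S * D) K) = 1\<^sub>m (m * n)"
  shows "m * n - n \<le> order 1 (char_poly (Pinv * (1\<^sub>m (m * n) - kron_mat ((S + J) * D) K)))"
proof -
  have SD: "S * D \<in> carrier_mat m m" unfolding D_def using S by simp
  have JD: "J * D \<in> carrier_mat m m"
    unfolding D_def J_def by (rule mult_carrier_mat[OF mat_carrier mat_diag_dim])
  have "(S + J) * D = S * D + J * D"
    unfolding D_def J_def by (rule add_mult_distrib_mat[OF S mat_carrier mat_diag_dim])
  hence "1\<^sub>m (m * n) - kron_mat ((S + J) * D) K = (1\<^sub>m (m * n) - kron_mat (S * D) K) - kron_mat (J * D) K"
    using one_minus_kron_mat_add_left[OF SD JD K] by simp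
  moreover have "m * n - n \<le> order 1 (char_poly (Pinv * ((1\<^sub>m (m * n) - kron_mat (S * D) K) - kron_mat (J * D) K)))"
  proof (rule order_one_char_poly_left_inverse_ge[OF Pinv _ _ _ inv])
    show "1\<^sub>m (m * n) - kron_mat (S * D) K \<in> carrier_mat (m * n) (m * n)"
      using kron_mat_carrierI[OF SD K] by (rule minus_carrier_mat)
    show "kron_mat (J * D) K \<in> carrier_mat (m * n) (m * n)" by (rule kron_mat_carrierI[OF JD K])
    show "kron_mat (weight_perp_basis m d) (1\<^sub>m n) \<in> carrier_mat (m * n) (m * n)"
      by (rule kron_mat_carrierI[OF weight_perp_basis_carrier one_carrier_mat])
    show "det (kron_mat (weight_perp_basis m d) (1\<^sub>m n)) \<noteq> 0"
      by (rule det_kron_weight_perp_basis_ne_zero[where d = d, OF d0])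
    show "(kron_mat (J * D) K * kron_mat (weight_perp_basis m d) (1\<^sub>m n)) $$ (i, j) = 0"
      if "i < m * n" "j < m * n" "n \<le> j" for i j
      using that unfolding J_def D_def by (rule kron_const_diag_mult_weight_perp_basis_eq_0[OF K])
  qed
  ultimately show ?thesis by simp
qed

section \<open>The preconditioned Kronecker system\<close>

lemma invertible_mat_if_det_ne_zero:
  fixes A :: "'a::field mat"
  assumes A: "A \<in> carrier_mat n n" and "det A \<noteq> 0"
  shows "invertible_mat A"
proof -
  from det_non_zero_imp_unit[OF assms] obtain B where "B \<in> carrier_mat n n"
    and "B * A = 1\<^sub>m n" "A * B = 1\<^sub>m n"
    unfolding Units_def ring_mat_def by auto
  thus ?thesis using A unfolding invertible_mat_def inverts_mat_def square_mat.simps by auto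
qed

lemma eigenvalue_left_inverse_mult:
  fixes Pinv P A :: "'a::field mat"
  assumes Pinv: "Pinv \<in> carrier_mat N N" and P: "P \<in> carrier_mat N N" and A: "A \<in> carrier_mat N N"
    and inv: "Pinv * P = 1\<^sub>m N" and ev: "eigenvalue (Pinv * A) \<mu>"
  shows "\<exists>v. v \<in> carrier_vec N \<and> v \<noteq> 0\<^sub>v N \<and> A *\<^sub>v v = \<mu> \<cdot>\<^sub>v (P *\<^sub>v v)"
proof -
  from ev obtain v where v: "v \<in> carrier_vec N" and v0: "v \<noteq> 0\<^sub>v N"
    and Av: "(Pinv * A) *\<^sub>v v = \<mu> \<cdot>\<^sub>v v"
    unfolding eigenvalue_def eigenvector_def using Pinv A by auto
  have "P * Pinv = 1\<^sub>m N" by (rule mat_mult_left_right_inverse[OF Pinv P inv])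
  hence "A *\<^sub>v v = (P * Pinv) *\<^sub>v (A *\<^sub>v v)" using A v by simp
  also have "\<dots> = P *\<^sub>v ((Pinv * A) *\<^sub>v v)"
    using P Pinv A v by (simp add: assoc_mult_mat_vec[of _ N N _ N])
  also have "\<dots> = \<mu> \<cdot>\<^sub>v (P *\<^sub>v v)" unfolding Av by (rule mult_mat_vec[OF P v])
  finally show ?thesis using v v0 by blast
qed

lemma of_real_one_minus_kron_mat:
  fixes A K :: "real mat"
  assumes "A \<in> carrier_mat m m" "K \<in> carrier_mat n n"
  shows "map_mat complex_of_real (1\<^sub>m (m * n) - kron_mat A K)
       = 1\<^sub>m (m * n) - kron_mat (map_mat of_real A) (map_mat of_real K)"
  using assms by (intro eq_matI) (auto simp: map_kron_mat[symmetric])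

lemma of_real_minus_mat:
  "A \<in> carrier_mat nr nc \<Longrightarrow> B \<in> carrier_mat nr nc \<Longrightarrow>
   map_mat complex_of_real (A - B) = map_mat of_real A - map_mat of_real B"
  by (intro eq_matI) auto

lemma sum_of_real_mult_mat_diag:
  fixes X :: "real mat" and W :: "nat \<Rightarrow> complex"
  assumes "X \<in> carrier_mat m m" and "l < m"
  shows "(\<Sum>l'<m. map_mat complex_of_real (X * mat_diag m d) $$ (l, l') * W l')
       = (\<Sum>j<m. of_real (X $$ (l, j) * d j) * W j)"
  using assms by (intro sum.cong refl) (simp add: mat_diag_mult_right[of _ m m])

lemma eigenvector_left_inverse_one_minus_kron:
  fixes C1 C2 K Pinv :: "'a::field mat"
  assumes C1: "C1 \<in> carrier_mat m m" and C2: "C2 \<in> carrier_mat m m" and K: "K \<in> carrier_mat n n"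
    and Pinv: "Pinv \<in> carrier_mat (m * n) (m * n)"
    and inv: "Pinv * (1\<^sub>m (m * n) - kron_mat C1 K) = 1\<^sub>m (m * n)"
    and ev: "eigenvalue (Pinv * ((1\<^sub>m (m * n) - kron_mat C1 K) - kron_mat C2 K)) \<mu>"
  obtains v where "v \<in> carrier_vec (m * n)" and "v \<noteq> 0\<^sub>v (m * n)"
    and "(1 - \<mu>) \<cdot>\<^sub>v (v - kron_mat C1 K *\<^sub>v v) = kron_mat C2 K *\<^sub>v v"
proof -
  define N where "N = m * n"
  define P where "P = 1\<^sub>m N - kron_mat C1 K"
  define Z where "Z = kron_mat C2 K"
  have X1: "kron_mat C1 K \<in> carrier_mat N N" and Z: "Z \<in> carrier_mat N N"
    unfolding N_def Z_def using C1 C2 K by auto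
  have P: "P \<in> carrier_mat N N" unfolding P_def using X1 by (rule minus_carrier_mat)
  obtain v where v: "v \<in> carrier_vec N" and v0: "v \<noteq> 0\<^sub>v N"
    and "(P - Z) *\<^sub>v v = \<mu> \<cdot>\<^sub>v (P *\<^sub>v v)"
    using eigenvalue_left_inverse_mult[OF Pinv[folded N_def] P minus_carrier_mat[OF Z]
        inv[folded N_def, folded P_def] ev[folded N_def, folded P_def Z_def]]
    by blast
  hence Av: "P *\<^sub>v v - Z *\<^sub>v v = \<mu> \<cdot>\<^sub>v (P *\<^sub>v v)"
    using P Z v by (simp add: minus_mult_distrib_mat_vec)
  have Pv: "P *\<^sub>v v = v - kron_mat C1 K *\<^sub>v v"
    unfolding P_def using v X1 by (simp add: minus_mult_distrib_mat_vec[of _ N N])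
  have "(1 - \<mu>) \<cdot>\<^sub>v (v - kron_mat C1 K *\<^sub>v v) = kron_mat C2 K *\<^sub>v v"
  proof (rule eq_vecI)
    fix i assume "i < dim_vec (kron_mat C2 K *\<^sub>v v)"
    hence i: "i < N" using C2 K unfolding N_def by simp
    have "(P *\<^sub>v v) $ i - (Z *\<^sub>v v) $ i = \<mu> * (P *\<^sub>v v) $ i"
      using arg_cong[OF Av, of "\<lambda>x. x $ i"] i P Z by simp
    thus "((1 - \<mu>) \<cdot>\<^sub>v (v - kron_mat C1 K *\<^sub>v v)) $ i = (kron_mat C2 K *\<^sub>v v) $ i"
      using i v carrier_matD[OF X1] unfolding Pv Z_def by (simp add: algebra_simps)
  qed (use C1 C2 v in \<open>auto simp: N_def\<close>)
  with v v0 show ?thesis using that unfolding N_def by blast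
qed

lemma of_real_left_inverse_one_minus_kron:
  fixes C1 C2 K Pinv :: "real mat"
  assumes C1: "C1 \<in> carrier_mat m m" and C2: "C2 \<in> carrier_mat m m" and K: "K \<in> carrier_mat n n"
    and Pinv: "Pinv \<in> carrier_mat (m * n) (m * n)"
    and inv: "Pinv * (1\<^sub>m (m * n) - kron_mat C1 K) = 1\<^sub>m (m * n)"
  shows "map_mat complex_of_real Pinv
          * (1\<^sub>m (m * n) - kron_mat (map_mat of_real C1) (map_mat of_real K)) = 1\<^sub>m (m * n)"
    and "map_mat complex_of_real (Pinv * ((1\<^sub>m (m * n) - kron_mat C1 K) - kron_mat C2 K))
       = map_mat complex_of_real Pinv * ((1\<^sub>m (m * n) - kron_mat (map_mat of_real C1) (map_mat of_real K))
           - kron_mat (map_mat of_real C2) (map_mat of_real K))"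
proof -
  have P: "1\<^sub>m (m * n) - kron_mat C1 K \<in> carrier_mat (m * n) (m * n)"
    using kron_mat_carrierI[OF C1 K] by (rule minus_carrier_mat)
  note P_eq = of_real_one_minus_kron_mat[OF C1 K]
  show "map_mat complex_of_real Pinv
          * (1\<^sub>m (m * n) - kron_mat (map_mat of_real C1) (map_mat of_real K)) = 1\<^sub>m (m * n)"
    unfolding P_eq[symmetric] of_real_hom.mat_hom_mult[OF Pinv P, symmetric] inv
    by (rule of_real_hom.mat_hom_one)
  have A: "(1\<^sub>m (m * n) - kron_mat C1 K) - kron_mat C2 K \<in> carrier_mat (m * n) (m * n)"
    using kron_mat_carrierI[OF C2 K] by (rule minus_carrier_mat)
  have "map_mat complex_of_real (Pinv * ((1\<^sub>m (m * n) - kron_mat C1 K) - kron_mat C2 K))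
      = map_mat complex_of_real Pinv * map_mat complex_of_real ((1\<^sub>m (m * n) - kron_mat C1 K) - kron_mat C2 K)"
    by (rule of_real_hom.mat_hom_mult[OF Pinv A])
  also have "map_mat complex_of_real ((1\<^sub>m (m * n) - kron_mat C1 K) - kron_mat C2 K)
      = map_mat complex_of_real (1\<^sub>m (m * n) - kron_mat C1 K) - map_mat complex_of_real (kron_mat C2 K)"
    using P kron_mat_carrierI[OF C2 K] by (rule of_real_minus_mat)
  also have "\<dots> = (1\<^sub>m (m * n) - kron_mat (map_mat of_real C1) (map_mat of_real K))
          - kron_mat (map_mat of_real C2) (map_mat of_real K)"
    unfolding P_eq map_kron_mat[OF of_real_mult] ..
  finally show "map_mat complex_of_real (Pinv * ((1\<^sub>m (m * n) - kron_mat C1 K) - kron_mat C2 K))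
       = map_mat complex_of_real Pinv * ((1\<^sub>m (m * n) - kron_mat (map_mat of_real C1) (map_mat of_real K))
           - kron_mat (map_mat of_real C2) (map_mat of_real K))" .
qed

lemma det_one_minus_kron_skew_ne_zero:
  fixes S K :: "real mat" and d :: "nat \<Rightarrow> real"
  assumes S: "S \<in> carrier_mat m m" and skew: "\<forall>l<m. \<forall>j<m. S $$ (l, j) = - S $$ (j, l)"
    and dpos: "\<forall>l<m. d l > 0" and K: "K \<in> carrier_mat n n"
    and diag: "\<exists>\<Lambda>. diagonal_mat \<Lambda> \<and> similar_mat (map_mat complex_of_real K) \<Lambda>"
    and real_spec: "\<forall>\<mu>. eigenvalue (map_mat complex_of_real K) \<mu> \<longrightarrow> \<mu> \<in> \<real>"
  shows "det (1\<^sub>m (m * n) - kron_mat (S * mat_diag m d) K) \<noteq> 0"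
proof
  assume "det (1\<^sub>m (m * n) - kron_mat (S * mat_diag m d) K) = 0"
  define C where "C = map_mat complex_of_real (S * mat_diag m d)"
  define KC where "KC = map_mat complex_of_real K"
  have SD: "S * mat_diag m d \<in> carrier_mat m m" using S by simp
  have C: "C \<in> carrier_mat m m" and KC: "KC \<in> carrier_mat n n" unfolding C_def KC_def using SD K by auto
  have "det (1\<^sub>m (m * n) - kron_mat C KC) = of_real (det (1\<^sub>m (m * n) - kron_mat (S * mat_diag m d) K))"
    unfolding C_def KC_def of_real_one_minus_kron_mat[OF SD K, symmetric] by (rule of_real_hom.hom_det)
  hence "det (1\<^sub>m (m * n) - kron_mat C KC) = 0" using \<open>det _ = 0\<close> by simp
  then obtain v where v: "v \<in> carrier_vec (m * n)" and v0: "v \<noteq> 0\<^sub>v (m * n)"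
    and "(1\<^sub>m (m * n) - kron_mat C KC) *\<^sub>v v = 0\<^sub>v (m * n)"
    using det_0_iff_vec_prod_zero_field[of _ "m * n"] kron_mat_carrierI[OF C KC]
    by (metis minus_carrier_mat)
  hence "1 \<cdot>\<^sub>v (v - kron_mat C KC *\<^sub>v v) = 0 \<cdot>\<^sub>v (kron_mat C KC *\<^sub>v v)"
    using v kron_mat_carrierI[OF C KC]
    by (auto simp: minus_mult_distrib_mat_vec[of _ "m * n" "m * n"] intro!: eq_vecI)
  moreover obtain L where dL: "diagonal_mat L" and sim: "similar_mat KC L" using diag unfolding KC_def by blast
  ultimately obtain k W where W0: "\<exists>l<m. W l \<noteq> 0" and evk: "eigenvalue KC (L $$ (k, k))"
    and eqW: "\<forall>l<m. 1 * (W l - L $$ (k, k) * (\<Sum>l'<m. C $$ (l, l') * W l'))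
                   = 0 * (L $$ (k, k) * (\<Sum>l'<m. C $$ (l, l') * W l'))"
    using kron_mat_similar_diagonal_decouple[OF KC sim dL C C v v0] by blast
  define lam where "lam = Re (L $$ (k, k))"
  have L_eq: "L $$ (k, k) = of_real lam" using real_spec evk unfolding lam_def KC_def by simp
  have "\<forall>l<m. W l - of_real lam * (\<Sum>j<m. of_real (S $$ (l, j) * d j) * W j) = 0"
  proof (intro allI impI)
    fix l assume l: "l < m"
    hence "(\<Sum>l'<m. C $$ (l, l') * W l') = (\<Sum>j<m. of_real (S $$ (l, j) * d j) * W j)"
      unfolding C_def by (rule sum_of_real_mult_mat_diag[OF S])
    thus "W l - of_real lam * (\<Sum>j<m. of_real (S $$ (l, j) * d j) * W j) = 0"
      using eqW l unfolding L_eq by simp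
  qed
  from skew_system_unique_complex[OF skew dpos this] W0 show False by blast
qed

lemma eigenvalue_skew_kron_left_inverse_ge_one:
  fixes m n :: nat and S K Pinv :: "real mat" and d :: "nat \<Rightarrow> real"
  defines "D \<equiv> mat_diag m d" and "J \<equiv> mat m m (\<lambda>_. 1 / 2)"
  assumes S: "S \<in> carrier_mat m m" and skew: "\<forall>l<m. \<forall>j<m. S $$ (l, j) = - S $$ (j, l)"
    and dpos: "\<forall>l<m. d l > 0" and K: "K \<in> carrier_mat n n"
    and diag: "\<exists>\<Lambda>. diagonal_mat \<Lambda> \<and> similar_mat (map_mat complex_of_real K) \<Lambda>"
    and spec: "\<forall>\<mu>. eigenvalue (map_mat complex_of_real K) \<mu> \<longrightarrow> \<mu> \<in> \<real> \<and> Re \<mu> < 0"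
    and Pinv: "Pinv \<in> carrier_mat (m * n) (m * n)"
    and inv: "Pinv * (1\<^sub>m (m * n) - kron_mat (S * D) K) = 1\<^sub>m (m * n)"
    and ev: "eigenvalue (map_mat complex_of_real (Pinv * (1\<^sub>m (m * n) - kron_mat ((S + J) * D) K))) \<mu>"
  shows "\<mu> \<in> \<real> \<and> 1 \<le> Re \<mu>"
proof -
  have SD: "S * D \<in> carrier_mat m m" unfolding D_def using S by simp
  have JD: "J * D \<in> carrier_mat m m"
    unfolding D_def J_def by (rule mult_carrier_mat[OF mat_carrier mat_diag_dim])
  have KC: "map_mat complex_of_real K \<in> carrier_mat n n" using K by simp
  have SDC: "map_mat complex_of_real (S * D) \<in> carrier_mat m m" using SD by simp
  have JDC: "map_mat complex_of_real (J * D) \<in> carrier_mat m m" using JD by simp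
  have "(S + J) * D = S * D + J * D"
    unfolding D_def J_def by (rule add_mult_distrib_mat[OF S mat_carrier mat_diag_dim])
  hence "eigenvalue (map_mat complex_of_real
      (Pinv * ((1\<^sub>m (m * n) - kron_mat (S * D) K) - kron_mat (J * D) K))) \<mu>"
    using ev one_minus_kron_mat_add_left[OF SD JD K] by simp
  hence "eigenvalue (map_mat complex_of_real Pinv * ((1\<^sub>m (m * n)
      - kron_mat (map_mat of_real (S * D)) (map_mat of_real K))
      - kron_mat (map_mat of_real (J * D)) (map_mat of_real K))) \<mu>"
    unfolding of_real_left_inverse_one_minus_kron(2)[OF SD JD K Pinv inv] .
  from eigenvector_left_inverse_one_minus_kron[OF SDC JDC KC _ _ this] Pinv
    of_real_left_inverse_one_minus_kron(1)[OF SD JD K Pinv inv]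
  obtain v where v: "v \<in> carrier_vec (m * n)" and v0: "v \<noteq> 0\<^sub>v (m * n)"
    and eq: "(1 - \<mu>) \<cdot>\<^sub>v (v - kron_mat (map_mat of_real (S * D)) (map_mat of_real K) *\<^sub>v v)
       = kron_mat (map_mat of_real (J * D)) (map_mat of_real K) *\<^sub>v v"
    by auto
  obtain L where dL: "diagonal_mat L" and sim: "similar_mat (map_mat complex_of_real K) L"
    using diag by blast
  obtain k W where W0: "\<exists>l<m. W l \<noteq> 0" and evk: "eigenvalue (map_mat complex_of_real K) (L $$ (k, k))"
    and eqW: "\<forall>l<m. (1 - \<mu>) * (W l - L $$ (k, k) * (\<Sum>l'<m. map_mat of_real (S * D) $$ (l, l') * W l'))
                   = 1 * (L $$ (k, k) * (\<Sum>l'<m. map_mat of_real (J * D) $$ (l, l') * W l'))"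
    using kron_mat_similar_diagonal_decouple[OF KC sim dL SDC JDC v v0, of "1 - \<mu>" 1] eq by auto
  define lam where "lam = Re (L $$ (k, k))"
  have lam: "lam < 0" and L_eq: "L $$ (k, k) = of_real lam"
    using spec evk unfolding lam_def by auto
  have "\<forall>l<m. (1 - \<mu>) * (W l - of_real lam * (\<Sum>j<m. of_real (S $$ (l, j) * d j) * W j))
                = of_real (lam / 2) * (\<Sum>j<m. of_real (d j) * W j)"
  proof (intro allI impI)
    fix l assume l: "l < m"
    have SD_sum: "(\<Sum>l'<m. map_mat of_real (S * D) $$ (l, l') * W l') = (\<Sum>j<m. of_real (S $$ (l, j) * d j) * W j)"
      using l unfolding D_def by (rule sum_of_real_mult_mat_diag[OF S])
    have "(\<Sum>l'<m. map_mat of_real (J * D) $$ (l, l') * W l')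
        = (\<Sum>j<m. of_real (mat m m (\<lambda>_. 1 / 2) $$ (l, j) * d j) * W j)"
      unfolding D_def J_def by (rule sum_of_real_mult_mat_diag[OF mat_carrier l])
    also have "\<dots> = of_real (1 / 2) * (\<Sum>j<m. of_real (d j) * W j)"
      unfolding sum_distrib_left using l by (intro sum.cong refl) auto
    finally have JD_sum: "(\<Sum>l'<m. map_mat of_real (J * D) $$ (l, l') * W l')
        = of_real (1 / 2) * (\<Sum>j<m. of_real (d j) * W j)" .
    have "(1 - \<mu>) * (W l - of_real lam * (\<Sum>l'<m. map_mat of_real (S * D) $$ (l, l') * W l'))
        = of_real lam * (\<Sum>l'<m. map_mat of_real (J * D) $$ (l, l') * W l')"
      using eqW l unfolding L_eq by simp
    thus "(1 - \<mu>) * (W l - of_real lam * (\<Sum>j<m. of_real (S $$ (l, j) * d j) * W j))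
                = of_real (lam / 2) * (\<Sum>j<m. of_real (d j) * W j)"
      unfolding SD_sum JD_sum by simp
  qed
  thus ?thesis by (rule skew_pencil_eigenvalue_ge_one[OF skew dpos lam W0])
qed

theorem skew_kron_preconditioned_spectrum:
  fixes m n :: nat and S K :: "real mat" and d :: "nat \<Rightarrow> real"
  defines "P \<equiv> 1\<^sub>m (m * n) - kron_mat (S * mat_diag m d) K"
    and "A \<equiv> 1\<^sub>m (m * n) - kron_mat ((S + mat m m (\<lambda>_. 1 / 2)) * mat_diag m d) K"
  assumes m: "0 < m" and S: "S \<in> carrier_mat m m" and skew: "\<forall>l<m. \<forall>j<m. S $$ (l, j) = - S $$ (j, l)"
    and dpos: "\<forall>l<m. d l > 0" and K: "K \<in> carrier_mat n n"
    and diag: "\<exists>\<Lambda>. diagonal_mat \<Lambda> \<and> similar_mat (map_mat complex_of_real K) \<Lambda>"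
    and spec: "\<forall>\<mu>. eigenvalue (map_mat complex_of_real K) \<mu> \<longrightarrow> \<mu> \<in> \<real> \<and> Re \<mu> < 0"
  shows "invertible_mat P \<and>
    (\<forall>Pinv \<in> carrier_mat (m * n) (m * n). Pinv * P = 1\<^sub>m (m * n) \<longrightarrow>
       m * n - n \<le> order 1 (char_poly (Pinv * A)) \<and>
       (\<forall>\<mu>. eigenvalue (map_mat complex_of_real (Pinv * A)) \<mu> \<longrightarrow> \<mu> \<in> \<real> \<and> 1 \<le> Re \<mu>))"
proof -
  have "P \<in> carrier_mat (m * n) (m * n)"
    unfolding P_def using kron_mat_carrierI[OF mult_carrier_mat[OF S mat_diag_dim] K]
    by (rule minus_carrier_mat)
  moreover have "det P \<noteq> 0"
    unfolding P_def using det_one_minus_kron_skew_ne_zero[OF S skew dpos K diag] spec by blast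
  ultimately have "invertible_mat P" by (rule invertible_mat_if_det_ne_zero)
  moreover have "m * n - n \<le> order 1 (char_poly (Pinv * A))"
    if "Pinv \<in> carrier_mat (m * n) (m * n)" and "Pinv * P = 1\<^sub>m (m * n)" for Pinv
    using that dpos m unfolding A_def P_def by (intro order_one_char_poly_ge_rank_one_kron[OF S K]) auto
  moreover have "\<mu> \<in> \<real> \<and> 1 \<le> Re \<mu>"
    if "Pinv \<in> carrier_mat (m * n) (m * n)" and "Pinv * P = 1\<^sub>m (m * n)"
      and "eigenvalue (map_mat complex_of_real (Pinv * A)) \<mu>" for Pinv \<mu>
    using that unfolding A_def P_def by (rule eigenvalue_skew_kron_left_inverse_ge_one[OF S skew dpos K diag spec])
  ultimately show ?thesis by blast
qed

section \<open>The Sinc discretisation\<close>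

definition sinc_weight :: "nat \<Rightarrow> real \<Rightarrow> real \<Rightarrow> nat \<Rightarrow> real" where
  "sinc_weight M h T l = h * (sinc_pt T h (int l - int M) * (T - sinc_pt T h (int l - int M)) / T)"

lemma sinc_pt_bounds:
  assumes "T > 0"
  shows "0 < sinc_pt T h j" and "sinc_pt T h j < T"
proof -
  let ?q = "exp (of_int j * h) / (1 + exp (of_int j * h))"
  have q: "0 < ?q" "?q < 1" by (simp_all add: add_pos_pos)
  have "sinc_pt T h j = T * ?q" unfolding sinc_pt_def by simp
  moreover have "0 < T * ?q" by (rule mult_pos_pos[OF assms q(1)])
  moreover have "T * ?q < T" using mult_strict_left_mono[OF q(2) assms] by simp
  ultimately show "0 < sinc_pt T h j" "sinc_pt T h j < T" by simp_all
qed

lemma sinc_weight_pos: "h > 0 \<Longrightarrow> T > 0 \<Longrightarrow> sinc_weight M h T l > 0"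
  unfolding sinc_weight_def using sinc_pt_bounds[of T h "int l - int M"] by simp

lemma D_mat_eq_mat_diag: "D_mat M h T = mat_diag (2 * M + 1) (sinc_weight M h T)"
  unfolding D_mat_def mat_diag_def sinc_weight_def by (intro eq_matI) auto

lemma Si_pi_minus: "Si_pi (- x) = - Si_pi x"
proof -
  let ?f = "\<lambda>t::real. sin (pi * t) / (pi * t)"
  have "(\<lambda>t. ?f (- t)) = ?f" by simp
  hence reflect: "integral {- b..0} ?f = integral {0..b} ?f" for b
    using Henstock_Kurzweil_Integration.integral_reflect_real[of b 0 ?f] by simp
  show ?thesis unfolding Si_pi_def using reflect[of x] reflect[of "- x"] by auto
qed

lemma S_mat_carrier [simp]: "S_mat M \<in> carrier_mat (2 * M + 1) (2 * M + 1)"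
  unfolding S_mat_def Im1_mat_def by auto

lemma S_mat_skew: "\<forall>l<2 * M + 1. \<forall>j<2 * M + 1. S_mat M $$ (l, j) = - S_mat M $$ (j, l)"
  unfolding S_mat_def by (simp add: Im1_mat_def field_simps)

lemma Im1_mat_eq_S_mat_add_half: "Im1_mat M = S_mat M + mat (2 * M + 1) (2 * M + 1) (\<lambda>_. 1 / 2)"
proof (rule eq_matI)
  fix l j assume "l < dim_row (S_mat M + mat (2 * M + 1) (2 * M + 1) (\<lambda>_. 1 / 2))"
    "j < dim_col (S_mat M + mat (2 * M + 1) (2 * M + 1) (\<lambda>_. 1 / 2))"
  moreover have "Si_pi (of_int (int j - int l)) = - Si_pi (of_int (int l - int j))"
    using Si_pi_minus[of "of_int (int l - int j)"] by simp
  ultimately show "Im1_mat M $$ (l, j) = (S_mat M + mat (2 * M + 1) (2 * M + 1) (\<lambda>_. 1 / 2)) $$ (l, j)"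
    unfolding S_mat_def Im1_mat_def by simp
qed (auto simp: S_mat_def Im1_mat_def)

lemma P_mat_eq:
  "K \<in> carrier_mat n n \<Longrightarrow> P_mat M h T K
     = 1\<^sub>m ((2 * M + 1) * n) - kron_mat (S_mat M * mat_diag (2 * M + 1) (sinc_weight M h T)) K"
  unfolding P_mat_def D_mat_eq_mat_diag by simp

lemma A_mat_eq:
  "K \<in> carrier_mat n n \<Longrightarrow> A_mat M h T K
     = 1\<^sub>m ((2 * M + 1) * n) - kron_mat ((S_mat M + mat (2 * M + 1) (2 * M + 1) (\<lambda>_. 1 / 2))
          * mat_diag (2 * M + 1) (sinc_weight M h T)) K"
  unfolding A_mat_def D_mat_eq_mat_diag Im1_mat_eq_S_mat_add_half by simp

theorem theorem3p3:
  fixes M n :: nat and h T :: real and K :: "real mat"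
  assumes "M \<ge> 1" and "h > 0" and "T > 0"
    and "K \<in> carrier_mat n n"
    and diag: "\<exists>\<Lambda>. diagonal_mat \<Lambda> \<and> similar_mat (map_mat complex_of_real K) \<Lambda>"
    and spec: "\<forall>\<mu>. eigenvalue (map_mat complex_of_real K) \<mu> \<longrightarrow> \<mu> \<in> \<real> \<and> Re \<mu> < 0"
  shows "invertible_mat (P_mat M h T K) \<and>
    (\<forall>Pinv \<in> carrier_mat ((2*M+1) * n) ((2*M+1) * n).
       Pinv * P_mat M h T K = 1\<^sub>m ((2*M+1) * n) \<longrightarrow>
         order 1 (char_poly (Pinv * A_mat M h T K)) \<ge> n * (2*M) \<and>
         (\<forall>\<mu>. eigenvalue (map_mat complex_of_real (Pinv * A_mat M h T K)) \<mu> \<longrightarrow>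
              \<mu> \<in> \<real> \<and> Re \<mu> \<ge> 1))"
proof -
  note K = \<open>K \<in> carrier_mat n n\<close>
  have m: "0 < 2 * M + 1" by simp
  have w: "\<forall>l<2 * M + 1. sinc_weight M h T l > 0" using assms sinc_weight_pos by blast
  have dim: "(2 * M + 1) * n - n = n * (2 * M)" by (simp add: algebra_simps)
  from skew_kron_preconditioned_spectrum[OF m S_mat_carrier S_mat_skew w K diag spec]
  show ?thesis unfolding P_mat_eq[OF K] A_mat_eq[OF K] dim .
qed

end
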